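(* Let $n\ge k\ge1$ and let $\mathbf{M}=(m_{i,j})$ be a $k\times n$ binary matrix satisfying the MDS Condition, all of whose rows have Hamming weight exactly $n-k+1$, and such that the zero sets $Z_i=\{j\in[n]: m_{i,j}=0\}$ satisfy $|Z_i\cap Z_{i'}|\le1$ for all $i\ne i'$. Then for every prime power $q\ge n+k-1$ there exists an $[n,k]_q$ MDS code having a generator matrix that fits $\mathbf{M}$.
   Context: $[n]=\{1,\ldots,n\}$. $\mathbf{M}$ satisfies the MDS Condition if $|\bigcup_{i\in I}{\sf supp}(\mathbf{M}_i)|\ge n-k+|I|$ for all nonempty $I\subseteq[k]$, where ${\sf supp}(\mathbf{M}_i)=\{j: m_{i,j}\ne0\}$. A matrix $\mathbf{G}=(g_{i,j})\in\mathbb{F}_q^{k\times n}$ fits $\mathbf{M}$ if $g_{i,j}=0$ whenever $m_{i,j}=0$. An $[n,k]_q$ MDS code is a $k$-dimensional linear code in $\mathbb{F}_q^n$ with minimum Hamming distance $n-k+1$. *)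

theory Defs
  imports Main
begin

text \<open>A k x n binary matrix is modelled as M :: nat => nat => bool, rows indexed by
  {..<k}, columns by {..<n}; M i j = True means m_{i,j} = 1 (nonzero).
  Vectors of F_q^n are functions nat => 'a, only coordinates < n matter.\<close>

definition supp :: "nat \<Rightarrow> (nat \<Rightarrow> nat \<Rightarrow> bool) \<Rightarrow> nat \<Rightarrow> nat set" where
  "supp n M i = {j. j < n \<and> M i j}"

definition zero_set :: "nat \<Rightarrow> (nat \<Rightarrow> nat \<Rightarrow> bool) \<Rightarrow> nat \<Rightarrow> nat set" where
  "zero_set n M i = {j. j < n \<and> \<not> M i j}"

definition MDS_condition :: "nat \<Rightarrow> nat \<Rightarrow> (nat \<Rightarrow> nat \<Rightarrow> bool) \<Rightarrow> bool" where
  "MDS_condition n k M \<longleftrightarrow>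
     (\<forall>I. I \<subseteq> {..<k} \<longrightarrow> I \<noteq> {} \<longrightarrow> card (\<Union>i\<in>I. supp n M i) \<ge> n - k + card I)"

definition fits :: "nat \<Rightarrow> nat \<Rightarrow> (nat \<Rightarrow> nat \<Rightarrow> 'a::zero) \<Rightarrow> (nat \<Rightarrow> nat \<Rightarrow> bool) \<Rightarrow> bool" where
  "fits n k G M \<longleftrightarrow> (\<forall>i<k. \<forall>j<n. \<not> M i j \<longrightarrow> G i j = 0)"

definition row_space :: "nat \<Rightarrow> nat \<Rightarrow> (nat \<Rightarrow> nat \<Rightarrow> 'a::field) \<Rightarrow> (nat \<Rightarrow> 'a) set" where
  "row_space n k G = {(\<lambda>j. if j < n then (\<Sum>i<k. c i * G i j) else 0) | c. True}"

definition rows_independent :: "nat \<Rightarrow> nat \<Rightarrow> (nat \<Rightarrow> nat \<Rightarrow> 'a::field) \<Rightarrow> bool" where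
  "rows_independent n k G \<longleftrightarrow>
     (\<forall>c. (\<forall>j<n. (\<Sum>i<k. c i * G i j) = 0) \<longrightarrow> (\<forall>i<k. c i = 0))"

definition is_generator_matrix :: "nat \<Rightarrow> nat \<Rightarrow> (nat \<Rightarrow> nat \<Rightarrow> 'a::field) \<Rightarrow> (nat \<Rightarrow> 'a) set \<Rightarrow> bool" where
  "is_generator_matrix n k G C \<longleftrightarrow> C = row_space n k G \<and> rows_independent n k G"

definition hamming_dist :: "nat \<Rightarrow> (nat \<Rightarrow> 'a) \<Rightarrow> (nat \<Rightarrow> 'a) \<Rightarrow> nat" where
  "hamming_dist n u v = card {j. j < n \<and> u j \<noteq> v j}"

definition min_distance :: "nat \<Rightarrow> (nat \<Rightarrow> 'a) set \<Rightarrow> nat" where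
  "min_distance n C = Min {hamming_dist n u v | u v. u \<in> C \<and> v \<in> C \<and> u \<noteq> v}"

definition is_linear_code :: "nat \<Rightarrow> nat \<Rightarrow> (nat \<Rightarrow> 'a::field) set \<Rightarrow> bool" where
  "is_linear_code n k C \<longleftrightarrow> (\<exists>G. is_generator_matrix n k G C)"

definition is_MDS_code :: "nat \<Rightarrow> nat \<Rightarrow> (nat \<Rightarrow> 'a::field) set \<Rightarrow> bool" where
  "is_MDS_code n k C \<longleftrightarrow> is_linear_code n k C \<and> min_distance n C = n - k + 1"

end

theory Submission
  imports Defs "HOL-Computational_Algebra.Polynomial" "Jordan_Normal_Form.Determinant"
begin

text \<open>Let \<open>Z t\<close> be the zero set of row \<open>t\<close>. For distinct points \<open>\<alpha> j\<close> take as row \<open>t\<close> of \<open>G\<close> the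
  values at the \<open>\<alpha> j\<close> of \<open>P t = \<Prod>j\<in>Z t. (x - \<alpha> j)\<close>, a polynomial of degree \<open>k - 1\<close>. Then \<open>G\<close> fits
  \<open>M\<close>, and a codeword \<open>\<Sum>t. c t * P t\<close> with \<open>c \<noteq> 0\<close> has at most \<open>k - 1\<close> zeros provided the \<open>P t\<close>
  are linearly independent, i.e. provided the matrix \<open>(P t (b l))\<close> is nonsingular for some points
  \<open>b 0, \<dots>, b (k - 1)\<close>. Its determinant is a polynomial in \<open>\<alpha>\<close> of degree at most \<open>k - 1\<close> in each
  variable, so once it is nonzero at some (not necessarily injective) \<open>\<alpha>0\<close>, distinct values can be
  chosen coordinate by coordinate as long as \<open>q \<ge> n + k - 1\<close>.

  The combinatorial heart is \<open>\<alpha>0\<close>: since two zero sets share at most one column and no column is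
  zero in every row, the columns can be labelled by the \<open>b l\<close> (or a further value \<open>\<gamma>\<close>) so that
  for every \<open>t\<close> the labels on \<open>Z t\<close> include \<open>b 0, \<dots>, b (t - 1)\<close> but not \<open>b t\<close>. The matrix is then
  triangular with nonzero diagonal.\<close>

definition poly_in_each_var :: "(nat \<Rightarrow> nat) \<Rightarrow> ((nat \<Rightarrow> 'a::comm_ring_1) \<Rightarrow> 'a) \<Rightarrow> bool" where
  "poly_in_each_var d f \<longleftrightarrow> (\<forall>j \<alpha>. \<exists>p. degree p \<le> d j \<and> (\<forall>t. f (\<alpha>(j := t)) = poly p t))"

lemma poly_in_each_varE:
  assumes "poly_in_each_var d f"
  obtains p where "degree p \<le> d j" "\<And>t. f (\<alpha>(j := t)) = poly p t"
  using assms unfolding poly_in_each_var_def by blast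

lemma poly_in_each_var_const: "poly_in_each_var d (\<lambda>_. c)"
  unfolding poly_in_each_var_def by (intro allI exI[of _ "[:c:]"]) auto

lemma poly_in_each_var_diff_var: "poly_in_each_var (\<lambda>j. if j = i then 1 else 0) (\<lambda>\<alpha>. c - \<alpha> i)"
  unfolding poly_in_each_var_def
proof (intro allI)
  fix j \<alpha>
  show "\<exists>p. degree p \<le> (if j = i then 1 else 0) \<and> (\<forall>t. c - (\<alpha>(j := t)) i = poly p t)"
  proof (cases "j = i")
    case True
    then show ?thesis by (intro exI[of _ "[:c, -1:]"]) auto
  next
    case False
    then show ?thesis by (intro exI[of _ "[:c - \<alpha> i:]"]) auto
  qed
qed

lemma poly_in_each_var_mono:
  "poly_in_each_var d f \<Longrightarrow> (\<And>j. d j \<le> d' j) \<Longrightarrow> poly_in_each_var d' f"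
  unfolding poly_in_each_var_def by (meson order_trans)

lemma poly_in_each_var_mult:
  assumes "poly_in_each_var d1 f" "poly_in_each_var d2 g"
  shows "poly_in_each_var (\<lambda>j. d1 j + d2 j) (\<lambda>\<alpha>. f \<alpha> * g \<alpha>)"
  unfolding poly_in_each_var_def
proof (intro allI)
  fix j \<alpha>
  obtain p q where "degree p \<le> d1 j" "\<And>t. f (\<alpha>(j:=t)) = poly p t"
    "degree q \<le> d2 j" "\<And>t. g (\<alpha>(j:=t)) = poly q t"
    using assms by (metis poly_in_each_varE)
  then show "\<exists>r. degree r \<le> d1 j + d2 j \<and> (\<forall>t. f (\<alpha>(j := t)) * g (\<alpha>(j := t)) = poly r t)"
    by (intro exI[of _ "p * q"]) (use degree_mult_le[of p q] in auto)
qed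

lemma poly_in_each_var_add:
  assumes "poly_in_each_var d f" "poly_in_each_var d g"
  shows "poly_in_each_var d (\<lambda>\<alpha>. f \<alpha> + g \<alpha>)"
  unfolding poly_in_each_var_def
proof (intro allI)
  fix j \<alpha>
  obtain p q where "degree p \<le> d j" "\<And>t. f (\<alpha>(j:=t)) = poly p t"
    "degree q \<le> d j" "\<And>t. g (\<alpha>(j:=t)) = poly q t"
    using assms by (metis poly_in_each_varE)
  then show "\<exists>r. degree r \<le> d j \<and> (\<forall>t. f (\<alpha>(j := t)) + g (\<alpha>(j := t)) = poly r t)"
    by (intro exI[of _ "p + q"]) (auto intro: degree_add_le)
qed

lemma poly_in_each_var_prod:
  assumes "finite I" "\<And>i. i \<in> I \<Longrightarrow> poly_in_each_var (d i) (f i)"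
  shows "poly_in_each_var (\<lambda>j. \<Sum>i\<in>I. d i j) (\<lambda>\<alpha>. \<Prod>i\<in>I. f i \<alpha>)"
  using assms
proof (induction I rule: finite_induct)
  case empty
  then show ?case using poly_in_each_var_const[of _ 1] by simp
next
  case (insert x F)
  then show ?case
    using poly_in_each_var_mult[of "d x" "f x" "\<lambda>j. \<Sum>i\<in>F. d i j"] by simp
qed

lemma poly_in_each_var_sum:
  assumes "finite I" "\<And>i. i \<in> I \<Longrightarrow> poly_in_each_var d (f i)"
  shows "poly_in_each_var d (\<lambda>\<alpha>. \<Sum>i\<in>I. f i \<alpha>)"
  using assms
proof (induction I rule: finite_induct)
  case empty
  then show ?case using poly_in_each_var_const[of _ 0] by simp
next
  case (insert x F)
  then show ?case using poly_in_each_var_add[of d "f x"] by simp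
qed

lemma poly_in_each_var_fix_var:
  assumes "poly_in_each_var d f"
  shows "poly_in_each_var d (\<lambda>\<alpha>. f (\<alpha>(i := c)))"
  unfolding poly_in_each_var_def
proof (intro allI)
  fix j \<alpha>
  show "\<exists>p. degree p \<le> d j \<and> (\<forall>t. f ((\<alpha>(j := t))(i := c)) = poly p t)"
  proof (cases "j = i")
    case True
    then show ?thesis by (intro exI[of _ "[:f (\<alpha>(i := c)):]"]) auto
  next
    case False
    obtain p where "degree p \<le> d j" "\<And>t. f ((\<alpha>(i := c))(j := t)) = poly p t"
      by (metis poly_in_each_varE[OF assms])
    with False show ?thesis by (metis fun_upd_twist)
  qed
qed

text \<open>Choosing the coordinates one at a time, each new coordinate has to avoid the previous ones
  and the roots of a nonzero univariate polynomial of degree at most \<open>d j\<close>.\<close>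
lemma poly_in_each_var_nonzero_at_inj:
  fixes f :: "(nat \<Rightarrow> 'a::{finite,idom}) \<Rightarrow> 'a"
  assumes "poly_in_each_var d f" "\<And>j. j < m \<Longrightarrow> d j + j < card (UNIV :: 'a set)" "f \<alpha> \<noteq> 0"
  shows "\<exists>\<beta>. inj_on \<beta> {..<m} \<and> f \<beta> \<noteq> 0"
  using assms
proof (induction m arbitrary: f \<alpha>)
  case 0
  then show ?case by auto
next
  case (Suc m)
  have "\<exists>\<beta>. inj_on \<beta> {..<m} \<and> f (\<beta>(m := \<alpha> m)) \<noteq> 0"
    using Suc.IH[OF poly_in_each_var_fix_var[OF Suc.prems(1), of m "\<alpha> m"], of \<alpha>] Suc.prems
    by (simp add: fun_upd_def)
  then obtain \<beta> where \<beta>: "inj_on \<beta> {..<m}" "f (\<beta>(m := \<alpha> m)) \<noteq> 0"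
    by blast
  obtain p where p: "degree p \<le> d m" "\<And>t. f (\<beta>(m := t)) = poly p t"
    by (metis poly_in_each_varE[OF Suc.prems(1)])
  have "p \<noteq> 0" using \<beta>(2) p(2) by (metis poly_0)
  have "card (\<beta> ` {..<m} \<union> {t. poly p t = 0}) \<le> card (\<beta> ` {..<m}) + card {t. poly p t = 0}"
    by (rule card_Un_le)
  also have "\<dots> \<le> m + d m"
    using card_image_le[of "{..<m}" \<beta>] card_poly_roots_bound[OF \<open>p \<noteq> 0\<close>] p(1) by simp
  also have "\<dots> < card (UNIV :: 'a set)" using Suc.prems(2)[of m] by simp
  finally have "\<beta> ` {..<m} \<union> {t. poly p t = 0} \<noteq> UNIV"
    by auto
  then obtain t where t: "t \<notin> \<beta> ` {..<m}" "poly p t \<noteq> 0"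
    by blast
  have "inj_on (\<beta>(m := t)) {..<Suc m}"
    using \<beta>(1) t(1) by (auto simp: inj_on_def lessThan_Suc)
  with t(2) p(2) show ?case by metis
qed

locale zero_pattern =
  fixes k :: nat and Z :: "nat \<Rightarrow> nat set"
  assumes finite_Z: "\<And>t. t < k \<Longrightarrow> finite (Z t)"
    and card_Z: "\<And>t. t < k \<Longrightarrow> card (Z t) = k - 1"
    and card_Z_Int: "\<And>t u. t < k \<Longrightarrow> u < k \<Longrightarrow> t \<noteq> u \<Longrightarrow> card (Z t \<inter> Z u) \<le> 1"
    and not_zero_in_all_rows: "\<And>j. \<exists>i<k. j \<notin> Z i"
begin

definition zero_rows :: "nat \<Rightarrow> nat set" where
  "zero_rows j = {t. t < k \<and> j \<in> Z t}"

lemma mem_zero_rows: "t \<in> zero_rows j \<longleftrightarrow> t < k \<and> j \<in> Z t"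
  unfolding zero_rows_def by simp

lemma finite_zero_rows: "finite (zero_rows j)"
  unfolding zero_rows_def by simp

lemma card_zero_rows: "card (zero_rows j) \<le> k - 1"
proof -
  obtain i where "i < k" "j \<notin> Z i"
    using not_zero_in_all_rows by blast
  then have "zero_rows j \<subseteq> {..<k} - {i}"
    unfolding zero_rows_def by auto
  then have "card (zero_rows j) \<le> card ({..<k} - {i})"
    by (intro card_mono) auto
  with \<open>i < k\<close> show ?thesis by simp
qed

lemma zero_rows_unique_column:
  assumes "t \<noteq> u" "t \<in> zero_rows j" "u \<in> zero_rows j" "t \<in> zero_rows j'" "u \<in> zero_rows j'"
  shows "j = j'"
proof -
  have "t < k" "u < k" "j \<in> Z t \<inter> Z u" "j' \<in> Z t \<inter> Z u"
    using assms unfolding zero_rows_def by auto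
  with card_Z_Int[of t u] assms(1) finite_Z show ?thesis
    by (metis One_nat_def card_le_Suc0_iff_eq finite_Int)
qed

text \<open>A shared column \<open>j\<close> gets the label \<open>b (first_gap j)\<close>: no row of \<open>zero_rows j\<close> forbids it,
  and every row of \<open>zero_rows j\<close> from the lowest block start on needs it. (\<open>first_gap j\<close> is junk
  when \<open>block_starts j = {}\<close>.)\<close>
definition block_starts :: "nat \<Rightarrow> nat set" where
  "block_starts j = {u \<in> zero_rows j. 0 < u \<and> u - 1 \<notin> zero_rows j}"

definition first_gap :: "nat \<Rightarrow> nat" where
  "first_gap j = Min (block_starts j) - 1"

lemma finite_block_starts: "finite (block_starts j)"
  unfolding block_starts_def using finite_zero_rows by simp

lemma first_gap:
  assumes "u \<in> block_starts j"
  shows "Suc (first_gap j) \<in> block_starts j" "first_gap j < u"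
proof -
  have "Min (block_starts j) \<in> block_starts j" "Min (block_starts j) \<le> u"
    using assms finite_block_starts by (auto intro: Min_in)
  then show "Suc (first_gap j) \<in> block_starts j" "first_gap j < u"
    unfolding first_gap_def block_starts_def by auto
qed

lemma zero_rows_initial_or_block_start:
  assumes "u \<in> zero_rows j"
  shows "{..u} \<subseteq> zero_rows j \<or> (\<exists>v\<in>block_starts j. v \<le> u)"
proof (rule disjCI)
  assume no_start: "\<not> (\<exists>v\<in>block_starts j. v \<le> u)"
  show "{..u} \<subseteq> zero_rows j"
  proof
    fix v assume "v \<in> {..u}"
    then have "v \<le> u" by simp
    then show "v \<in> zero_rows j"
    proof (induction v rule: inc_induct)
      case base
      show ?case using assms .
    next
      case (step v)
      with no_start show ?case
        unfolding block_starts_def by fastforce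
    qed
  qed
qed

definition shared_cols :: "nat \<Rightarrow> nat set" where
  "shared_cols t = {j \<in> Z t. 2 \<le> card (zero_rows j)}"

definition private_cols :: "nat \<Rightarrow> nat set" where
  "private_cols t = {j \<in> Z t. zero_rows j = {t}}"

definition served :: "nat \<Rightarrow> nat set" where
  "served t = first_gap ` {j \<in> shared_cols t. \<exists>u\<in>block_starts j. u \<le> t}"

lemma finite_shared_cols: "t < k \<Longrightarrow> finite (shared_cols t)"
  unfolding shared_cols_def using finite_Z by simp

lemma served_subset: "served t \<subseteq> {..<t}"
  unfolding served_def using first_gap(2) by fastforce

lemma zero_rows_eq_singleton:
  assumes "t < k" "j \<in> Z t" "\<not> 2 \<le> card (zero_rows j)"
  shows "zero_rows j = {t}"
proof -
  have "t \<in> zero_rows j" "card (zero_rows j) \<le> Suc 0"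
    using assms by (auto simp: mem_zero_rows)
  then show ?thesis using card_le_Suc0_iff_eq[OF finite_zero_rows] by blast
qed

lemma card_shared_private:
  assumes "t < k"
  shows "card (shared_cols t) + card (private_cols t) = k - 1"
proof -
  have "Z t = shared_cols t \<union> private_cols t"
    using zero_rows_eq_singleton[OF assms] unfolding shared_cols_def private_cols_def by auto
  moreover have "shared_cols t \<inter> private_cols t = {}"
    unfolding shared_cols_def private_cols_def by auto
  ultimately show ?thesis
    using card_Z[OF assms] finite_Z[OF assms] by (metis card_Un_disjoint finite_Un)
qed

lemma first_gap_eq:
  assumes "t \<in> block_starts j" "\<forall>u\<in>block_starts j. t \<le> u"
  shows "first_gap j = t - 1"
proof -
  have "Min (block_starts j) = t"
    using assms finite_block_starts by (intro Min_eqI) auto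
  then show ?thesis unfolding first_gap_def by simp
qed

definition early_cols :: "nat \<Rightarrow> nat set" where
  "early_cols t = {j \<in> shared_cols t. \<exists>u\<in>block_starts j. u < t}"

definition late_cols :: "nat \<Rightarrow> nat set" where
  "late_cols t = {j \<in> shared_cols t. \<forall>u\<in>block_starts j. t \<le> u}"

lemma card_early_cols:
  assumes "t < k"
  shows "card (early_cols t) + (if t - 1 \<in> served t then 1 else 0) \<le> card (served t)"
proof -
  have inj: "inj_on first_gap (early_cols t)"
  proof (rule inj_onI)
    fix j j' assume j: "j \<in> early_cols t" and j': "j' \<in> early_cols t"
      and eq: "first_gap j = first_gap j'"
    then obtain u where "u \<in> block_starts j" "u < t"
      unfolding early_cols_def by blast
    then have "Suc (first_gap j) \<in> zero_rows j" "Suc (first_gap j) < t"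
      using first_gap[of u j] unfolding block_starts_def by auto
    moreover have "Suc (first_gap j) \<in> zero_rows j'"
      using j' eq first_gap(1) unfolding early_cols_def block_starts_def by fastforce
    moreover have "t \<in> zero_rows j" "t \<in> zero_rows j'"
      using j j' assms unfolding early_cols_def shared_cols_def by (auto simp: mem_zero_rows)
    ultimately show "j = j'"
      using zero_rows_unique_column[of "Suc (first_gap j)" t] by blast
  qed
  have sub: "first_gap ` early_cols t \<subseteq> served t"
    unfolding early_cols_def served_def by (auto intro: less_imp_le)
  have fresh: "t - 1 \<notin> first_gap ` early_cols t"
    unfolding early_cols_def using first_gap(2) by fastforce
  have fin: "finite (served t)"
    using finite_subset[OF served_subset] by blast
  have "card (first_gap ` early_cols t) + (if t - 1 \<in> served t then 1 else 0)
      = card ((if t - 1 \<in> served t then {t - 1} else {}) \<union> first_gap ` early_cols t)"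
    using fresh finite_subset[OF sub fin] by auto
  also have "\<dots> \<le> card (served t)"
    using sub fin by (intro card_mono) auto
  finally show ?thesis
    using inj by (simp add: card_image)
qed

lemma late_colsD:
  assumes "j \<in> late_cols t" "t < k"
  shows "t \<in> zero_rows j" "2 \<le> card (zero_rows j)" "\<And>u. u \<in> block_starts j \<Longrightarrow> t \<le> u"
  using assms unfolding late_cols_def shared_cols_def by (auto simp: mem_zero_rows)

lemma late_col_initial:
  assumes "j \<in> late_cols t" "t < k" "t - 1 \<notin> served t"
  shows "{..t} \<subseteq> zero_rows j"
proof -
  have "t \<notin> block_starts j"
  proof
    assume "t \<in> block_starts j"
    then have "first_gap j = t - 1"
      using first_gap_eq late_colsD(3)[OF assms(1,2)] by blast
    with \<open>t \<in> block_starts j\<close> assms show False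
      unfolding served_def late_cols_def by force
  qed
  then show ?thesis
    using zero_rows_initial_or_block_start[OF late_colsD(1)[OF assms(1,2)]]
      late_colsD(3)[OF assms(1,2)] le_antisym by blast
qed

lemma late_col_above_or_zero:
  assumes "j \<in> late_cols t" "t < k"
  shows "t < Max (zero_rows j) \<or> 0 \<in> zero_rows j"
proof (rule disjCI)
  assume "0 \<notin> zero_rows j"
  have above: "t \<le> u" if "u \<in> zero_rows j" for u
  proof -
    have "\<exists>v\<in>block_starts j. v \<le> u"
      using zero_rows_initial_or_block_start[OF that] \<open>0 \<notin> zero_rows j\<close> by auto
    then show ?thesis
      using late_colsD(3)[OF assms] by (auto intro: order.trans)
  qed
  have "\<not> zero_rows j \<subseteq> {t}"
    using late_colsD(2)[OF assms] card_mono[of "{t}" "zero_rows j"] by auto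
  then obtain u where "u \<in> zero_rows j" "u \<noteq> t"
    by blast
  moreover have "u \<le> Max (zero_rows j)"
    using Max_ge[OF finite_zero_rows] \<open>u \<in> zero_rows j\<close> .
  ultimately show "t < Max (zero_rows j)"
    using above by fastforce
qed

lemma card_cols_with_row_zero:
  assumes "0 < t" "t < k"
  shows "card {j \<in> Z t. 0 \<in> zero_rows j} \<le> 1"
proof -
  have "finite {j \<in> Z t. 0 \<in> zero_rows j}"
    using finite_Z[OF assms(2)] by simp
  moreover have "\<forall>j\<in>{j \<in> Z t. 0 \<in> zero_rows j}. \<forall>j'\<in>{j \<in> Z t. 0 \<in> zero_rows j}. j = j'"
    using assms zero_rows_unique_column[of 0 t] by (auto simp: mem_zero_rows)
  ultimately show ?thesis
    by (subst One_nat_def, subst card_le_Suc0_iff_eq)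
qed

lemma card_cols_reaching_above:
  assumes "t < k"
  shows "card {j \<in> Z t. t < Max (zero_rows j)} \<le> k - 1 - t"
proof -
  let ?A = "{j \<in> Z t. t < Max (zero_rows j)}"
  have Max_mem: "t \<in> zero_rows j" "Max (zero_rows j) \<in> zero_rows j" if "j \<in> ?A" for j
  proof -
    show "t \<in> zero_rows j"
      using that assms by (simp add: mem_zero_rows)
    then show "Max (zero_rows j) \<in> zero_rows j"
      using finite_zero_rows by (intro Max_in) auto
  qed
  have "inj_on (\<lambda>j. Max (zero_rows j)) ?A"
  proof (rule inj_onI)
    fix j j' assume "j \<in> ?A" "j' \<in> ?A" "Max (zero_rows j) = Max (zero_rows j')"
    then show "j = j'"
      using Max_mem zero_rows_unique_column[of "Max (zero_rows j)" t j j'] by fastforce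
  qed
  moreover have "(\<lambda>j. Max (zero_rows j)) ` ?A \<subseteq> {t<..<k}"
    using Max_mem by (auto simp: mem_zero_rows)
  ultimately have "card ?A \<le> card {t<..<k}"
    by (intro card_inj_on_le) auto
  then show ?thesis by simp
qed

text \<open>If \<open>t - 1\<close> is not served, every late column contains all rows up to \<open>t\<close>, so there is at most
  one of them, and it leaves out some row above \<open>t\<close>.\<close>
lemma card_late_cols:
  assumes "0 < t" "t < k"
  shows "card (late_cols t) \<le> k - 1 - t + (if t - 1 \<in> served t then 1 else 0)"
proof -
  let ?above = "{j \<in> Z t. t < Max (zero_rows j)}" and ?zero = "{j \<in> Z t. 0 \<in> zero_rows j}"
  have fin: "finite ?above" "finite ?zero"
    using finite_Z[OF assms(2)] by simp_all
  have late_Z: "late_cols t \<subseteq> Z t"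
    unfolding late_cols_def shared_cols_def by auto
  show ?thesis
  proof (cases "t - 1 \<in> served t")
    case True
    have "late_cols t \<subseteq> ?above \<union> ?zero"
      using late_col_above_or_zero[OF _ assms(2)] late_Z by blast
    then have "card (late_cols t) \<le> card (?above \<union> ?zero)"
      using fin by (intro card_mono) auto
    also have "\<dots> \<le> card ?above + card ?zero"
      by (rule card_Un_le)
    finally show ?thesis
      using True card_cols_reaching_above[OF assms(2)] card_cols_with_row_zero[OF assms] by simp
  next
    case False
    show ?thesis
    proof (cases "late_cols t = {}")
      case False
      then obtain j where j: "j \<in> late_cols t" by blast
      obtain i where "i < k" "j \<notin> Z i"
        using not_zero_in_all_rows by blast
      then have "i \<notin> {..t}"
        using late_col_initial[OF j assms(2) \<open>t - 1 \<notin> served t\<close>] by (auto simp: mem_zero_rows)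
      have "late_cols t \<subseteq> ?zero"
        using late_col_initial[OF _ assms(2) \<open>t - 1 \<notin> served t\<close>] late_Z by auto
      then have "card (late_cols t) \<le> 1"
        using card_mono[OF fin(2)] card_cols_with_row_zero[OF assms] by (meson order.trans)
      with \<open>i \<notin> {..t}\<close> \<open>i < k\<close> show ?thesis by simp
    qed simp
  qed
qed

lemma card_shared_cols:
  assumes "0 < t" "t < k"
  shows "card (shared_cols t) \<le> card (served t) + (k - 1 - t)"
proof -
  have "shared_cols t = early_cols t \<union> late_cols t" "early_cols t \<inter> late_cols t = {}"
    unfolding early_cols_def late_cols_def by (auto simp: not_le)
  then have "card (shared_cols t) = card (early_cols t) + card (late_cols t)"
    using finite_shared_cols[OF assms(2)] by (metis card_Un_disjoint finite_Un)
  then show ?thesis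
    using card_early_cols[OF assms(2)] card_late_cols[OF assms] by linarith
qed

lemma card_unserved_le_private:
  assumes "t < k"
  shows "card ({..<t} - served t) \<le> card (private_cols t)"
proof (cases "t = 0")
  case False
  have "card ({..<t} - served t) = t - card (served t)"
    using card_Diff_subset[OF finite_subset[OF served_subset] served_subset] by simp
  then show ?thesis
    using card_shared_cols[of t] card_shared_private[OF assms] assms False by linarith
qed simp

lemma triangular_assignment:
  fixes b :: "nat \<Rightarrow> 'a" and \<gamma> :: 'a
  assumes b: "inj_on b {..<k}" and \<gamma>: "\<gamma> \<notin> b ` {..<k}"
  shows "\<exists>\<alpha>. \<forall>t<k. (\<forall>l<t. \<exists>j\<in>Z t. \<alpha> j = b l) \<and> (\<forall>j\<in>Z t. \<alpha> j \<noteq> b t)"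
proof -
  have "\<exists>h. {..<t} - served t \<subseteq> h ` private_cols t" if t: "t < k" for t
  proof -
    have "finite (private_cols t)"
      using finite_Z[OF t] unfolding private_cols_def by simp
    then obtain g where g: "g ` ({..<t} - served t) \<subseteq> private_cols t" "inj_on g ({..<t} - served t)"
      using card_le_inj[OF _ _ card_unserved_le_private[OF t]] by blast
    have "{..<t} - served t \<subseteq> inv_into ({..<t} - served t) g ` private_cols t"
    proof
      fix l assume l: "l \<in> {..<t} - served t"
      show "l \<in> inv_into ({..<t} - served t) g ` private_cols t"
        using inv_into_f_f[OF g(2) l] g(1) l by (intro image_eqI[of _ _ "g l"]) auto
    qed
    then show ?thesis by blast
  qed
  then obtain h where h: "\<And>t. t < k \<Longrightarrow> {..<t} - served t \<subseteq> h t ` private_cols t"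
    by metis
  define \<alpha> where "\<alpha> j =
    (if 2 \<le> card (zero_rows j) then (if block_starts j = {} then \<gamma> else b (first_gap j))
     else let t = the_elem (zero_rows j) in if h t j < t then b (h t j) else \<gamma>)" for j
  have \<alpha>_private: "\<alpha> j = (if h t j < t then b (h t j) else \<gamma>)" if "j \<in> private_cols t" for j t
    using that unfolding private_cols_def \<alpha>_def by simp
  show ?thesis
  proof (intro exI allI impI conjI ballI)
    fix t l assume t: "t < k" and "l < t"
    show "\<exists>j\<in>Z t. \<alpha> j = b l"
    proof (cases "l \<in> served t")
      case True
      then obtain j u where "j \<in> shared_cols t" "u \<in> block_starts j" "l = first_gap j"
        unfolding served_def by blast
      then show ?thesis unfolding shared_cols_def \<alpha>_def by auto
    next
      case False
      with h[OF t] \<open>l < t\<close> obtain j where "j \<in> private_cols t" "h t j = l"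
        by blast
      with \<open>l < t\<close> have "\<alpha> j = b l" using \<alpha>_private by simp
      with \<open>j \<in> private_cols t\<close> show ?thesis unfolding private_cols_def by blast
    qed
  next
    fix t j assume t: "t < k" and j: "j \<in> Z t"
    show "\<alpha> j \<noteq> b t"
    proof (cases "2 \<le> card (zero_rows j)")
      case True
      show ?thesis
      proof (cases "block_starts j = {}")
        case False
        then obtain u where u: "u \<in> block_starts j" by blast
        then have "first_gap j \<noteq> t" "first_gap j < k"
          using first_gap[OF u] t j unfolding block_starts_def by (auto simp: mem_zero_rows)
        then show ?thesis
          using True False b t unfolding \<alpha>_def by (auto dest: inj_onD)
      qed (use True \<gamma> t in \<open>auto simp: \<alpha>_def\<close>)
    next
      case False
      then have "j \<in> private_cols t"
        using zero_rows_eq_singleton[OF t j] j unfolding private_cols_def by blast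
      then show ?thesis
        using \<alpha>_private b \<gamma> t by (auto dest: inj_onD)
    qed
  qed
qed

end

definition eval_matrix :: "nat \<Rightarrow> (nat \<Rightarrow> nat set) \<Rightarrow> (nat \<Rightarrow> 'a::comm_ring_1) \<Rightarrow> (nat \<Rightarrow> 'a) \<Rightarrow> 'a mat"
  where "eval_matrix k Z b \<alpha> = mat k k (\<lambda>(l, t). \<Prod>j\<in>Z t. (b l - \<alpha> j))"

lemma eval_matrix_carrier [simp]: "eval_matrix k Z b \<alpha> \<in> carrier_mat k k"
  unfolding eval_matrix_def by simp

lemma poly_in_each_var_det_eval_matrix:
  assumes "\<And>t. t < k \<Longrightarrow> finite (Z t)"
  shows "poly_in_each_var (\<lambda>j. card {t. t < k \<and> j \<in> Z t}) (\<lambda>\<alpha>. det (eval_matrix k Z b \<alpha>))"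
proof -
  let ?term = "\<lambda>p \<alpha>. signof p * (\<Prod>t\<in>{0..<k}. \<Prod>j\<in>Z t. (b (p t) - \<alpha> j))"
  have det_eq: "det (eval_matrix k Z b \<alpha>) = (\<Sum>p\<in>{p. p permutes {0..<k}}. ?term p \<alpha>)" for \<alpha>
  proof -
    have "det (eval_matrix k Z b \<alpha>) = det (transpose_mat (eval_matrix k Z b \<alpha>))"
      by (rule det_transpose[OF eval_matrix_carrier, symmetric])
    also have "\<dots> = (\<Sum>p\<in>{p. p permutes {0..<k}}. ?term p \<alpha>)"
      unfolding det_def'[OF transpose_carrier_mat[THEN iffD2, OF eval_matrix_carrier]]
      by (intro sum.cong refl arg_cong[where f = "\<lambda>x. _ * x"] prod.cong)
        (auto simp: eval_matrix_def dest: permutes_in_image)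
    finally show ?thesis .
  qed
  have degree: "(\<Sum>t\<in>{0..<k}. \<Sum>j'\<in>Z t. if j = j' then 1 else 0) = card {t. t < k \<and> j \<in> Z t}" for j
  proof -
    have "(\<Sum>t\<in>{0..<k}. \<Sum>j'\<in>Z t. if j = j' then 1 else 0) = (\<Sum>t\<in>{0..<k}. if j \<in> Z t then 1 else 0)"
      using assms by (intro sum.cong) auto
    also have "\<dots> = card {t. t < k \<and> j \<in> Z t}"
      by (simp add: sum.If_cases Int_def conj_commute)
    finally show ?thesis .
  qed
  have "poly_in_each_var (\<lambda>j. 0 + card {t. t < k \<and> j \<in> Z t}) (?term p)" for p
    unfolding degree[symmetric]
    by (intro poly_in_each_var_mult poly_in_each_var_const poly_in_each_var_prod
        poly_in_each_var_diff_var assms) auto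
  then show ?thesis
    unfolding det_eq by (intro poly_in_each_var_sum) (auto simp: finite_permutations)
qed

lemma det_eval_matrix_nonzero:
  fixes b \<alpha> :: "nat \<Rightarrow> 'a::idom"
  assumes "\<And>t. t < k \<Longrightarrow> finite (Z t)"
    and "\<And>t l. t < k \<Longrightarrow> l < t \<Longrightarrow> \<exists>j\<in>Z t. \<alpha> j = b l"
    and "\<And>t j. t < k \<Longrightarrow> j \<in> Z t \<Longrightarrow> \<alpha> j \<noteq> b t"
  shows "det (eval_matrix k Z b \<alpha>) \<noteq> 0"
proof -
  have "det (eval_matrix k Z b \<alpha>) = (\<Prod>t\<in>{0..<k}. \<Prod>j\<in>Z t. (b t - \<alpha> j))"
  proof (subst det_lower_triangular[of k])
    fix l t assume "l < t" "t < k"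
    then obtain j where "j \<in> Z t" "\<alpha> j = b l"
      using assms(2) by blast
    then show "eval_matrix k Z b \<alpha> $$ (l, t) = 0"
      using \<open>l < t\<close> \<open>t < k\<close> assms(1) unfolding eval_matrix_def
      by (auto intro!: prod_zero bexI[of _ j])
  qed (auto simp: prod_list_diag_prod eval_matrix_def)
  also have "\<dots> \<noteq> 0"
    using assms(1,3) by force
  finally show ?thesis .
qed

lemma eval_matrix_combination_nonzero:
  fixes \<alpha> b c :: "nat \<Rightarrow> 'a::idom"
  assumes "det (eval_matrix k Z b \<alpha>) \<noteq> 0" "\<exists>t<k. c t \<noteq> 0"
  shows "(\<Sum>t<k. Polynomial.smult (c t) (\<Prod>j\<in>Z t. [:- \<alpha> j, 1:])) \<noteq> 0"
proof
  assume Q: "(\<Sum>t<k. Polynomial.smult (c t) (\<Prod>j\<in>Z t. [:- \<alpha> j, 1:])) = 0"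
  have "eval_matrix k Z b \<alpha> *\<^sub>v vec k c = 0\<^sub>v k"
  proof (rule eq_vecI)
    fix l assume "l < dim_vec (0\<^sub>v k)"
    then have "(eval_matrix k Z b \<alpha> *\<^sub>v vec k c) $ l
        = poly (\<Sum>t<k. Polynomial.smult (c t) (\<Prod>j\<in>Z t. [:- \<alpha> j, 1:])) (b l)"
      by (simp add: eval_matrix_def scalar_prod_def poly_sum poly_prod atLeast0LessThan mult.commute)
    with \<open>l < dim_vec (0\<^sub>v k)\<close> show "(eval_matrix k Z b \<alpha> *\<^sub>v vec k c) $ l = 0\<^sub>v k $ l"
      unfolding Q by simp
  qed (simp add: eval_matrix_def)
  moreover have "vec k c \<noteq> 0\<^sub>v k"
    using assms(2) by (metis index_vec index_zero_vec(1))
  ultimately show False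
    using assms(1) det_0_iff_vec_prod_zero[OF eval_matrix_carrier, of k Z b \<alpha>]
      vec_carrier[of k c] by blast
qed

definition vanishing_matrix :: "(nat \<Rightarrow> nat set) \<Rightarrow> (nat \<Rightarrow> 'a::comm_ring_1) \<Rightarrow> nat \<Rightarrow> nat \<Rightarrow> 'a" where
  "vanishing_matrix Z \<alpha> t j = (\<Prod>j'\<in>Z t. (\<alpha> j - \<alpha> j'))"

lemma vanishing_matrix_eq_zero: "finite (Z t) \<Longrightarrow> j \<in> Z t \<Longrightarrow> vanishing_matrix Z \<alpha> t j = 0"
  unfolding vanishing_matrix_def by (intro prod_zero) auto

lemma card_zeros_combination:
  fixes \<alpha> b c :: "nat \<Rightarrow> 'a::idom"
  assumes inj: "inj_on \<alpha> {..<n}" and "det (eval_matrix k Z b \<alpha>) \<noteq> 0" "\<exists>t<k. c t \<noteq> 0"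
    and "\<And>t. t < k \<Longrightarrow> finite (Z t)" "\<And>t. t < k \<Longrightarrow> card (Z t) \<le> k - 1"
  shows "card {j. j < n \<and> (\<Sum>t<k. c t * vanishing_matrix Z \<alpha> t j) = 0} \<le> k - 1"
proof -
  define Q where "Q = (\<Sum>t<k. Polynomial.smult (c t) (\<Prod>j\<in>Z t. [:- \<alpha> j, 1:]))"
  have "Q \<noteq> 0"
    unfolding Q_def using assms(2,3) by (rule eval_matrix_combination_nonzero)
  have poly_Q: "poly Q x = (\<Sum>t<k. c t * (\<Prod>j\<in>Z t. (x - \<alpha> j)))" for x
    unfolding Q_def by (simp add: poly_sum poly_prod)
  have "degree (\<Prod>j\<in>Z t. [:- \<alpha> j, 1:]) \<le> k - 1" if "t < k" for t
    using degree_prod_sum_le[OF assms(4)[OF that], of "\<lambda>j. [:- \<alpha> j, 1:]"] assms(5)[OF that]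
    by simp
  then have "degree Q \<le> k - 1"
    unfolding Q_def by (intro degree_sum_le) (auto intro: order.trans[OF degree_smult_le])
  define zeros where "zeros = {j. j < n \<and> poly Q (\<alpha> j) = 0}"
  have "card zeros = card (\<alpha> ` zeros)"
    using inj by (intro card_image[symmetric] inj_on_subset[OF inj]) (auto simp: zeros_def)
  also have "\<dots> \<le> card {x. poly Q x = 0}"
    using poly_roots_finite[OF \<open>Q \<noteq> 0\<close>] by (intro card_mono) (auto simp: zeros_def)
  also have "\<dots> \<le> k - 1"
    using card_poly_roots_bound[OF \<open>Q \<noteq> 0\<close>] \<open>degree Q \<le> k - 1\<close> by linarith
  finally show ?thesis
    unfolding zeros_def poly_Q vanishing_matrix_def .
qed

lemma ex_inj_and_fresh:
  assumes "k < card (UNIV :: 'a::finite set)"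
  shows "\<exists>(b :: nat \<Rightarrow> 'a) \<gamma>. inj_on b {..<k} \<and> \<gamma> \<notin> b ` {..<k}"
proof -
  obtain f :: "nat \<Rightarrow> 'a" where f: "inj_on f {..k}"
    using card_le_inj[of "{..k}" "UNIV :: 'a set"] assms by auto
  then have "f k \<notin> f ` {..<k}"
    by (auto dest: inj_onD)
  with f show ?thesis
    by (intro exI[of _ f] exI[of _ "f k"]) (auto intro: inj_on_subset)
qed

context zero_pattern
begin

lemma exists_nonsingular_eval_matrix:
  assumes "k \<le> n" "n + k - 1 \<le> card (UNIV :: 'a::{finite,idom} set)"
  shows "\<exists>(b :: nat \<Rightarrow> 'a) \<alpha>. inj_on \<alpha> {..<n} \<and> det (eval_matrix k Z b \<alpha>) \<noteq> 0"
proof -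
  have "k \<noteq> 0"
    using not_zero_in_all_rows[of 0] by auto
  moreover have "2 \<le> card (UNIV :: 'a set)"
    using card_mono[of UNIV "{0, 1 :: 'a}"] by simp
  ultimately have "k < card (UNIV :: 'a set)"
    using assms by linarith
  then obtain b :: "nat \<Rightarrow> 'a" and \<gamma> where b: "inj_on b {..<k}" "\<gamma> \<notin> b ` {..<k}"
    using ex_inj_and_fresh by blast
  obtain \<alpha>0 where "\<forall>t<k. (\<forall>l<t. \<exists>j\<in>Z t. \<alpha>0 j = b l) \<and> (\<forall>j\<in>Z t. \<alpha>0 j \<noteq> b t)"
    using triangular_assignment[OF b] by blast
  then have "det (eval_matrix k Z b \<alpha>0) \<noteq> 0"
    by (intro det_eval_matrix_nonzero finite_Z) auto
  moreover have "poly_in_each_var (\<lambda>_. k - 1) (\<lambda>\<alpha>. det (eval_matrix k Z b \<alpha>))"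
  proof (rule poly_in_each_var_mono)
    show "poly_in_each_var (\<lambda>j. card {t. t < k \<and> j \<in> Z t}) (\<lambda>\<alpha>. det (eval_matrix k Z b \<alpha>))"
      using finite_Z by (rule poly_in_each_var_det_eval_matrix)
    show "card {t. t < k \<and> j \<in> Z t} \<le> k - 1" for j
      using card_zero_rows[of j] unfolding zero_rows_def .
  qed
  moreover have "k - 1 + j < card (UNIV :: 'a set)" if "j < n" for j
    using that assms \<open>k \<noteq> 0\<close> by linarith
  ultimately show ?thesis
    using poly_in_each_var_nonzero_at_inj by blast
qed

end

definition codeword :: "nat \<Rightarrow> nat \<Rightarrow> (nat \<Rightarrow> nat \<Rightarrow> 'a::field) \<Rightarrow> (nat \<Rightarrow> 'a) \<Rightarrow> nat \<Rightarrow> 'a" where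
  "codeword n k G c = (\<lambda>j. if j < n then (\<Sum>i<k. c i * G i j) else 0)"

lemma row_space_eq_range_codeword: "row_space n k G = range (codeword n k G)"
  unfolding row_space_def codeword_def by auto

lemma hamming_dist_codeword:
  "hamming_dist n (codeword n k G c) (codeword n k G c')
     = card {j. j < n \<and> (\<Sum>i<k. (c i - c' i) * G i j) \<noteq> 0}"
  unfolding hamming_dist_def codeword_def
  by (rule arg_cong[where f = card]) (auto simp: left_diff_distrib sum_subtractf)

lemma card_nonzeros_eq:
  "card {j. j < n \<and> f j \<noteq> 0} = n - card {j. j < n \<and> f j = 0}"
proof -
  have "{j. j < n \<and> f j \<noteq> 0} = {..<n} - {j. j < n \<and> f j = 0}" by auto
  then show ?thesis by (simp add: card_Diff_subset subset_eq)
qed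

lemma rows_independent_of_min_weight:
  assumes "0 < w"
    and weight: "\<And>c. \<exists>i<k. c i \<noteq> 0 \<Longrightarrow> w \<le> card {j. j < n \<and> (\<Sum>i<k. c i * G i j) \<noteq> 0}"
  shows "rows_independent n k G"
  unfolding rows_independent_def
proof (rule allI, rule impI)
  fix c assume "\<forall>j<n. (\<Sum>i<k. c i * G i j) = 0"
  then have no_support: "{j. j < n \<and> (\<Sum>i<k. c i * G i j) \<noteq> 0} = {}" by auto
  show "\<forall>i<k. c i = 0"
  proof (rule ccontr)
    assume "\<not> (\<forall>i<k. c i = 0)"
    then have "w \<le> card {j. j < n \<and> (\<Sum>i<k. c i * G i j) \<noteq> 0}"
      by (intro weight) auto
    with \<open>0 < w\<close> show False unfolding no_support by simp
  qed
qed

lemma min_distance_row_space: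
  assumes "0 < w"
    and weight: "\<And>c. \<exists>i<k. c i \<noteq> 0 \<Longrightarrow> w \<le> card {j. j < n \<and> (\<Sum>i<k. c i * G i j) \<noteq> 0}"
    and "i0 < k" "card {j. j < n \<and> G i0 j \<noteq> 0} = w"
  shows "min_distance n (row_space n k G) = w"
proof -
  define D where "D = {hamming_dist n u v |u v. u \<in> row_space n k G \<and> v \<in> row_space n k G \<and> u \<noteq> v}"
  have D_ge: "w \<le> d" if "d \<in> D" for d
  proof -
    obtain c c' where d: "d = hamming_dist n (codeword n k G c) (codeword n k G c')"
      and ne: "codeword n k G c \<noteq> codeword n k G c'"
      using \<open>d \<in> D\<close> unfolding D_def row_space_eq_range_codeword by blast
    have "\<exists>i<k. c i - c' i \<noteq> 0"
      using ne unfolding codeword_def by auto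
    then show ?thesis
      unfolding d hamming_dist_codeword by (rule weight)
  qed
  define e where "e = (\<lambda>i. if i = i0 then 1 else 0 :: 'a)"
  have "(\<Sum>i<k. (e i - 0) * G i j) = G i0 j" for j
    using assms(3) by (simp add: e_def if_distrib[of "\<lambda>x. x * _"] cong: if_cong)
  then have dist: "hamming_dist n (codeword n k G e) (codeword n k G (\<lambda>_. 0)) = w"
    unfolding hamming_dist_codeword using assms(4) by simp
  moreover have "codeword n k G e \<noteq> codeword n k G (\<lambda>_. 0)"
  proof
    assume "codeword n k G e = codeword n k G (\<lambda>_. 0)"
    then show False using dist \<open>0 < w\<close> unfolding hamming_dist_def by simp
  qed
  ultimately have "w \<in> D"
    unfolding D_def row_space_eq_range_codeword by (metis (mono_tags, lifting) mem_Collect_eq rangeI)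
  moreover have "D \<subseteq> {..n}"
    unfolding D_def hamming_dist_def by (auto intro: order.trans[OF card_mono[of "{..<n}"]])
  ultimately show ?thesis
    unfolding min_distance_def D_def[symmetric] using D_ge by (intro Min_eqI) (auto intro: finite_subset)
qed

lemma MDS_code_of_few_zeros:
  fixes G :: "nat \<Rightarrow> nat \<Rightarrow> 'a::field"
  assumes "k \<le> n" "i0 < k" "k - 1 \<le> card {j. j < n \<and> G i0 j = 0}"
    and few_zeros: "\<And>c. \<exists>i<k. c i \<noteq> 0 \<Longrightarrow> card {j. j < n \<and> (\<Sum>i<k. c i * G i j) = 0} \<le> k - 1"
  shows "is_generator_matrix n k G (row_space n k G)" "is_MDS_code n k (row_space n k G)"
proof -
  have weight: "n - k + 1 \<le> card {j. j < n \<and> (\<Sum>i<k. c i * G i j) \<noteq> 0}" if "\<exists>i<k. c i \<noteq> 0" for c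
    using few_zeros[OF that] assms(1,2) card_nonzeros_eq[of n "\<lambda>j. \<Sum>i<k. c i * G i j"] by linarith
  have "(\<Sum>i<k. (if i = i0 then 1 else 0) * G i j) = G i0 j" for j
    using assms(2) by (simp add: if_distrib[of "\<lambda>x. x * _"] cong: if_cong)
  then have "n - k + 1 \<le> card {j. j < n \<and> G i0 j \<noteq> 0}"
    using weight[of "\<lambda>i. if i = i0 then 1 else 0"] assms(2) by auto
  then have "card {j. j < n \<and> G i0 j \<noteq> 0} = n - k + 1"
    using assms(1,3) card_nonzeros_eq[of n "G i0"] by linarith
  then show "is_generator_matrix n k G (row_space n k G)" "is_MDS_code n k (row_space n k G)"
    using rows_independent_of_min_weight[OF _ weight] min_distance_row_space[OF _ weight assms(2)]
    unfolding is_MDS_code_def is_linear_code_def is_generator_matrix_def by auto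
qed

lemma zero_pattern_zero_set:
  assumes "1 \<le> k" "k \<le> n" "MDS_condition n k M"
    and "\<forall>i<k. card (supp n M i) = n - k + 1"
    and "\<forall>i<k. \<forall>i'<k. i \<noteq> i' \<longrightarrow> card (zero_set n M i \<inter> zero_set n M i') \<le> 1"
  shows "zero_pattern k (zero_set n M)"
proof
  show fin: "finite (zero_set n M t)" for t
    unfolding zero_set_def by simp
  show "card (zero_set n M t) = k - 1" if "t < k" for t
  proof -
    have "zero_set n M t \<union> supp n M t = {..<n}" "zero_set n M t \<inter> supp n M t = {}"
      unfolding zero_set_def supp_def by auto
    then have "card (zero_set n M t) + card (supp n M t) = n"
      using fin by (metis card_Un_disjoint card_lessThan finite_Un finite_lessThan)
    with assms(1,2,4) that show ?thesis by simp
  qed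
  show "card (zero_set n M t \<inter> zero_set n M u) \<le> 1" if "t < k" "u < k" "t \<noteq> u" for t u
    using assms(5) that by blast
  show "\<exists>i<k. j \<notin> zero_set n M i" for j
  proof (cases "j < n")
    case True
    have "0 \<in> {..<k}"
      using assms(1) by simp
    then have "{..<k} \<noteq> {}"
      by blast
    then have "n - k + card {..<k} \<le> card (\<Union>i<k. supp n M i)"
      using assms(3) unfolding MDS_condition_def by blast
    then have "n \<le> card (\<Union>i<k. supp n M i)"
      using assms(2) by simp
    moreover have "(\<Union>i<k. supp n M i) \<subseteq> {..<n}"
      unfolding supp_def by auto
    ultimately have "(\<Union>i<k. supp n M i) = {..<n}"
      by (intro card_seteq) auto
    with True show ?thesis
      unfolding supp_def zero_set_def by auto
  qed (use assms(1) in \<open>auto simp: zero_set_def intro!: exI[of _ 0]\<close>)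
qed

theorem mainTheorem7:
  fixes n k :: nat and M :: "nat \<Rightarrow> nat \<Rightarrow> bool"
  assumes "1 \<le> k" and "k \<le> n"
    and "MDS_condition n k M"
    and "\<forall>i<k. card (supp n M i) = n - k + 1"
    and "\<forall>i<k. \<forall>i'<k. i \<noteq> i' \<longrightarrow> card (zero_set n M i \<inter> zero_set n M i') \<le> 1"
    and "card (UNIV :: 'a set) \<ge> n + k - 1"
  shows "\<exists>(G :: nat \<Rightarrow> nat \<Rightarrow> 'a::{finite,field}) C. fits n k G M \<and> is_generator_matrix n k G C \<and> is_MDS_code n k C"
proof -
  interpret zero_pattern k "zero_set n M"
    using assms(1-5) by (rule zero_pattern_zero_set)
  obtain b :: "nat \<Rightarrow> 'a" and \<alpha> where \<alpha>: "inj_on \<alpha> {..<n}" "det (eval_matrix k (zero_set n M) b \<alpha>) \<noteq> 0"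
    using exists_nonsingular_eval_matrix assms(2,6) by blast
  let ?G = "vanishing_matrix (zero_set n M) \<alpha>"
  have G_zero: "?G i j = 0" if "j \<in> zero_set n M i" for i j
    using that by (intro vanishing_matrix_eq_zero) (simp_all add: zero_set_def)
  have fits: "fits n k ?G M"
    unfolding fits_def using G_zero by (simp add: zero_set_def)
  have "card (zero_set n M 0) \<le> card {j. j < n \<and> ?G 0 j = 0}"
    using G_zero by (intro card_mono) (auto simp: zero_set_def)
  then have zeros_row0: "k - 1 \<le> card {j. j < n \<and> ?G 0 j = 0}"
    using card_Z[of 0] assms(1) by simp
  have few_zeros: "card {j. j < n \<and> (\<Sum>i<k. c i * ?G i j) = 0} \<le> k - 1"
    if "\<exists>i<k. c i \<noteq> 0" for c
    by (rule card_zeros_combination[OF \<alpha> that]) (simp_all add: finite_Z card_Z)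
  have "is_generator_matrix n k ?G (row_space n k ?G)" "is_MDS_code n k (row_space n k ?G)"
    using MDS_code_of_few_zeros[of k n 0 ?G] assms(1,2) zeros_row0 few_zeros by auto
  with fits show ?thesis by blast
qed

end
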